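(* For all integers $k\ge0$, $l\ge1$, the following identities hold on $R^k$: \[i(\alpha)\circ X^l-X^l\circ i(\alpha)=r(l,k)\,X^{l-1},\qquad X\circ i(\alpha)^l-i(\alpha)^l\circ X=-r(l,k-l+1)\,i(\alpha)^{l-1},\] where $r(l,k)=-\frac{l}{2}\big(2(n+1)\delta+2k+l-1\big)$.
   Context: Let $n\ge1$, $M=\mathbb{R}^{2n+1}$ with coordinates $(q^1,\dots,q^n,p^1,\dots,p^n,t)$. For $\mu\in\mathbb{R}$, $\mathcal{S}^k_\mu$ denotes the space of smooth functions $S(x,\xi)$ on $M\times\mathbb{R}^{2n+1}$ homogeneous polynomial of degree $k$ in $\xi=(\xi_{q^1},\dots,\xi_{q^n},\xi_{p^1},\dots,\xi_{p^n},\xi_t)$. Fix $\delta\in\mathbb{R}$ and set $R^k=\mathcal{S}^k_{\delta+\frac{k}{n+1}}$ for $k\ge0$, $R^{j}=0$ for $j<0$. Let $E_s=\sum_i(p^i\partial_{p^i}+q^i\partial_{q^i})$, $\langle E_s,\xi\rangle=\sum_i(p^i\xi_{p^i}+q^i\xi_{q^i})$, $D(S)=\sum_i(\xi_{q^i}\partial_{p^i}S-\xi_{p^i}\partial_{q^i}S)+\xi_tE_s(S)-\langle E_s,\xi\rangle\partial_tS$. Operators: $i(\alpha):R^k\to R^{k-1}$, $i(\alpha)(S)=\frac12\big(\sum_i(p^i\partial_{\xi_{q^i}}S-q^i\partial_{\xi_{p^i}}S)-\partial_{\xi_t}S\big)$; $X:R^k\to R^{k+1}$, $X(S)=D(S)+(2(n+1)\delta+k)\xi_tS$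 (the exponent of each operator is applied with the appropriate degree of its argument). *)

theory Defs
  imports "HOL-Analysis.Analysis"
begin

text \<open>A point of M = R^(2n+1): (q, p, t) with q, p in R^n (index type 'n, n = CARD('n)).
 A point of the phase space M x R^(2n+1) is a pair (x, xi) of such triples.\<close>
type_synonym 'n pt = "(real^'n) \<times> (real^'n) \<times> real"

definition qc :: "'n::finite pt \<Rightarrow> 'n \<Rightarrow> real" where "qc x i = fst x $ i"
definition pc :: "'n::finite pt \<Rightarrow> 'n \<Rightarrow> real" where "pc x i = fst (snd x) $ i"
definition tc :: "'n::finite pt \<Rightarrow> real" where "tc x = snd (snd x)"

definition eq :: "'n::finite \<Rightarrow> 'n pt" where "eq i = (axis i 1, 0, 0)"
definition ep :: "'n::finite \<Rightarrow> 'n pt" where "ep i = (0, axis i 1, 0)"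
definition et :: "'n::finite pt" where "et = (0, 0, 1)"

definition pd :: "'a::real_normed_vector \<Rightarrow> ('a \<Rightarrow> real) \<Rightarrow> 'a \<Rightarrow> real" where
  "pd v f z = deriv (\<lambda>s. f (z + s *\<^sub>R v)) 0"

fun iter_pd :: "'a::real_normed_vector list \<Rightarrow> ('a \<Rightarrow> real) \<Rightarrow> 'a \<Rightarrow> real" where
  "iter_pd [] f = f"
| "iter_pd (v # vs) f = pd v (iter_pd vs f)"

definition smooth_fn :: "('a::euclidean_space \<Rightarrow> real) \<Rightarrow> bool" where
  "smooth_fn f \<longleftrightarrow> (\<forall>vs. set vs \<subseteq> Basis \<longrightarrow>
      continuous_on UNIV (iter_pd vs f) \<and>
      (\<forall>v\<in>Basis. \<forall>z. (\<lambda>s. iter_pd vs f (z + s *\<^sub>R v)) differentiable (at 0)))"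

definition multi_idx :: "nat \<Rightarrow> ('n::finite pt \<Rightarrow> nat) set" where
  "multi_idx k = {a. (\<forall>b. b \<notin> Basis \<longrightarrow> a b = 0) \<and> (\<Sum>b\<in>Basis. a b) = k}"

definition hom_poly_xi :: "nat \<Rightarrow> ('n::finite pt \<times> 'n pt \<Rightarrow> real) \<Rightarrow> bool" where
  "hom_poly_xi k S \<longleftrightarrow> (\<exists>c. \<forall>x xi. S (x, xi) =
      (\<Sum>a\<in>multi_idx k. c a x * (\<Prod>b\<in>Basis. (xi \<bullet> b) ^ a b)))"

text \<open>The space R^k = S^k_{delta + k/(n+1)} (as a space of functions; the weight only
 records the transformation law and does not enter the operators); R^j = 0 for j < 0.\<close>
definition Rsp :: "int \<Rightarrow> ('n::finite pt \<times> 'n pt \<Rightarrow> real) set" where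
  "Rsp k = (if k < 0 then {\<lambda>_. 0} else {S. smooth_fn S \<and> hom_poly_xi (nat k) S})"

definition dx :: "'n::finite pt \<Rightarrow> ('n pt \<times> 'n pt \<Rightarrow> real) \<Rightarrow> 'n pt \<times> 'n pt \<Rightarrow> real" where
  "dx v = pd (v, 0)"
definition dxi :: "'n::finite pt \<Rightarrow> ('n pt \<times> 'n pt \<Rightarrow> real) \<Rightarrow> 'n pt \<times> 'n pt \<Rightarrow> real" where
  "dxi v = pd (0, v)"

definition Es :: "('n::finite pt \<times> 'n pt \<Rightarrow> real) \<Rightarrow> 'n pt \<times> 'n pt \<Rightarrow> real" where
  "Es S z = (\<Sum>i\<in>UNIV. pc (fst z) i * dx (ep i) S z + qc (fst z) i * dx (eq i) S z)"

definition Dop :: "('n::finite pt \<times> 'n pt \<Rightarrow> real) \<Rightarrow> 'n pt \<times> 'n pt \<Rightarrow> real" where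
  "Dop S z = (let x = fst z; xi = snd z in
     (\<Sum>i\<in>UNIV. qc xi i * dx (ep i) S z - pc xi i * dx (eq i) S z)
     + tc xi * Es S z
     - (\<Sum>i\<in>UNIV. pc x i * pc xi i + qc x i * qc xi i) * dx et S z)"

definition ialpha :: "('n::finite pt \<times> 'n pt \<Rightarrow> real) \<Rightarrow> 'n pt \<times> 'n pt \<Rightarrow> real" where
  "ialpha S z = (let x = fst z in
     (1/2) * ((\<Sum>i\<in>UNIV. pc x i * dxi (eq i) S z - qc x i * dxi (ep i) S z) - dxi et S z))"

text \<open>X on R^k (k = degree of the argument)\<close>
definition Xop :: "real \<Rightarrow> int \<Rightarrow> ('n::finite pt \<times> 'n pt \<Rightarrow> real) \<Rightarrow> 'n pt \<times> 'n pt \<Rightarrow> real" where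
  "Xop \<delta> k S z = Dop S z + (2 * (real CARD('n) + 1) * \<delta> + real_of_int k) * tc (snd z) * S z"

text \<open>X^l on R^k: X_{k+l-1} o ... o X_{k+1} o X_k\<close>
fun Xpow :: "real \<Rightarrow> nat \<Rightarrow> int \<Rightarrow> ('n::finite pt \<times> 'n pt \<Rightarrow> real) \<Rightarrow> 'n pt \<times> 'n pt \<Rightarrow> real" where
  "Xpow \<delta> 0 k S = S"
| "Xpow \<delta> (Suc l) k S = Xop \<delta> (k + int l) (Xpow \<delta> l k S)"

definition rr :: "nat \<Rightarrow> real \<Rightarrow> nat \<Rightarrow> int \<Rightarrow> real" where
  "rr n \<delta> l k = - (real l / 2) * (2 * (real n + 1) * \<delta> + 2 * real_of_int k + real l - 1)"

end

(* The operators D, i(alpha) and the Euler operator E = sum_c xi_c d/dxi_c are vector fields with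
   polynomial coefficients on phase space. The commutator of two such vector fields is again one,
   with coefficients obtained by applying each field to the coefficients of the other (the second
   derivatives cancel by symmetry). Computing coefficients gives
     [i(alpha), D] = - xi_t i(alpha) - E/2,   [E, D] = D,   [E, i(alpha)] = - i(alpha). The first relation then yields the
   case l = 1, i(alpha) X_m - X_(m-1) i(alpha) = r(1,m) on functions with E S = m S, and both
   identities follow by induction on l from r(l+1,k) = r(1,k+l) + r(l,k) = r(1,k) + r(l,k+1). *)

theory Submission
  imports Defs
begin

section \<open>Directional derivatives\<close>

definition differentiable_along :: "'a::real_normed_vector \<Rightarrow> ('a \<Rightarrow> real) \<Rightarrow> 'a \<Rightarrow> bool" where
  "differentiable_along v f z \<longleftrightarrow> (\<lambda>s. f (z + s *\<^sub>R v)) differentiable (at 0)"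

lemma has_pd:
  "differentiable_along v f z \<Longrightarrow> ((\<lambda>s. f (z + s *\<^sub>R v)) has_real_derivative pd v f z) (at 0)"
  unfolding pd_def differentiable_along_def using DERIV_deriv_iff_real_differentiable by blast

lemma pd_eqI: "((\<lambda>s. f (z + s *\<^sub>R v)) has_real_derivative D) (at 0) \<Longrightarrow> pd v f z = D"
  unfolding pd_def by (rule DERIV_imp_deriv)

lemma differentiable_alongI:
  "((\<lambda>s. f (z + s *\<^sub>R v)) has_real_derivative D) (at 0) \<Longrightarrow> differentiable_along v f z"
  unfolding differentiable_along_def using real_differentiable_def by blast

lemma has_pd_along_line:
  assumes "\<And>y. differentiable_along v f y"
  shows "((\<lambda>s. f (z + s *\<^sub>R v)) has_real_derivative pd v f (z + \<sigma> *\<^sub>R v)) (at \<sigma>)"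
proof -
  have "((\<lambda>h. f ((z + \<sigma> *\<^sub>R v) + h *\<^sub>R v)) has_real_derivative pd v f (z + \<sigma> *\<^sub>R v)) (at 0)"
    using has_pd[OF assms] .
  moreover have "(\<lambda>h. f ((z + \<sigma> *\<^sub>R v) + h *\<^sub>R v)) = (\<lambda>h. f (z + (h + \<sigma>) *\<^sub>R v))"
    by (simp add: algebra_simps)
  ultimately show ?thesis
    using DERIV_shift[of "\<lambda>s. f (z + s *\<^sub>R v)" _ 0 \<sigma>] by simp
qed

lemma pd_has_derivative: "(f has_derivative D) (at z) \<Longrightarrow> pd v f z = D v"
proof (rule pd_eqI)
  assume "(f has_derivative D) (at z)"
  moreover have "((\<lambda>s::real. z + s *\<^sub>R v) has_derivative (\<lambda>s. s *\<^sub>R v)) (at 0)"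
    by (auto intro!: derivative_eq_intros)
  ultimately have "((\<lambda>s. f (z + s *\<^sub>R v)) has_derivative (\<lambda>s. D (s *\<^sub>R v))) (at 0)"
    using has_derivative_compose[of "\<lambda>s. z + s *\<^sub>R v"] by fastforce
  moreover have "(\<lambda>s. D (s *\<^sub>R v)) = (*) (D v)"
    using \<open>(f has_derivative D) (at z)\<close> has_derivative_linear linear_scale by fastforce
  ultimately show "((\<lambda>s. f (z + s *\<^sub>R v)) has_real_derivative D v) (at 0)"
    unfolding has_field_derivative_def by simp
qed

lemma differentiable_along_const [simp]: "differentiable_along v (\<lambda>z. c) z"
  unfolding differentiable_along_def by simp

lemma differentiable_along_add [simp]:
  "differentiable_along v f z \<Longrightarrow> differentiable_along v g z \<Longrightarrow>
   differentiable_along v (\<lambda>z. f z + g z) z"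
  unfolding differentiable_along_def by simp

lemma differentiable_along_diff [simp]:
  "differentiable_along v f z \<Longrightarrow> differentiable_along v g z \<Longrightarrow>
   differentiable_along v (\<lambda>z. f z - g z) z"
  unfolding differentiable_along_def by (simp add: differentiable_diff)

lemma differentiable_along_minus [simp]:
  "differentiable_along v f z \<Longrightarrow> differentiable_along v (\<lambda>z. - f z) z"
  unfolding differentiable_along_def by (simp add: differentiable_minus)

lemma differentiable_along_mult [simp]:
  "differentiable_along v f z \<Longrightarrow> differentiable_along v g z \<Longrightarrow>
   differentiable_along v (\<lambda>z. f z * g z) z"
  unfolding differentiable_along_def by simp

lemma differentiable_along_divide [simp]:
  "differentiable_along v f z \<Longrightarrow> differentiable_along v (\<lambda>z. f z / c) z"
  using differentiable_along_mult[OF differentiable_along_const[of v "1/c"], of f]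
  by (simp add: field_simps)

lemma differentiable_along_sum [simp]:
  "finite I \<Longrightarrow> (\<And>i. i \<in> I \<Longrightarrow> differentiable_along v (f i) z) \<Longrightarrow>
   differentiable_along v (\<lambda>z. \<Sum>i\<in>I. f i z) z"
  unfolding differentiable_along_def by (rule differentiable_sum) auto

lemma differentiable_along_linear: "linear l \<Longrightarrow> differentiable_along v l z"
  by (rule differentiable_alongI) (auto simp: linear_add linear_scale intro!: derivative_eq_intros)

lemma pd_const [simp]: "pd v (\<lambda>z. c) z = 0"
  by (intro pd_eqI) (auto intro!: derivative_eq_intros)

lemma pd_add [simp]:
  "differentiable_along v f z \<Longrightarrow> differentiable_along v g z \<Longrightarrow>
   pd v (\<lambda>z. f z + g z) z = pd v f z + pd v g z"
  by (intro pd_eqI DERIV_add has_pd)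

lemma pd_diff [simp]:
  "differentiable_along v f z \<Longrightarrow> differentiable_along v g z \<Longrightarrow>
   pd v (\<lambda>z. f z - g z) z = pd v f z - pd v g z"
  by (intro pd_eqI DERIV_diff has_pd)

lemma pd_minus [simp]: "differentiable_along v f z \<Longrightarrow> pd v (\<lambda>z. - f z) z = - pd v f z"
  by (intro pd_eqI DERIV_minus has_pd)

lemma pd_mult [simp]:
  "differentiable_along v f z \<Longrightarrow> differentiable_along v g z \<Longrightarrow>
   pd v (\<lambda>z. f z * g z) z = pd v f z * g z + f z * pd v g z"
  by (intro pd_eqI) (auto intro!: derivative_eq_intros has_pd)

lemma pd_divide [simp]: "differentiable_along v f z \<Longrightarrow> pd v (\<lambda>z. f z / c) z = pd v f z / c"
  unfolding divide_inverse using pd_mult[of v f z "\<lambda>z. inverse c"] by simp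

lemma pd_sum [simp]:
  "finite I \<Longrightarrow> (\<And>i. i \<in> I \<Longrightarrow> differentiable_along v (f i) z) \<Longrightarrow>
   pd v (\<lambda>z. \<Sum>i\<in>I. f i z) z = (\<Sum>i\<in>I. pd v (f i) z)"
  by (intro pd_eqI DERIV_sum has_pd) auto

lemma pd_linear: "linear l \<Longrightarrow> pd v l z = l v"
  by (rule pd_eqI) (auto simp: linear_add linear_scale intro!: derivative_eq_intros)

section \<open>Smooth functions\<close>

lemma smooth_fn_iff:
  "smooth_fn f \<longleftrightarrow> (\<forall>vs. set vs \<subseteq> Basis \<longrightarrow> continuous_on UNIV (iter_pd vs f) \<and>
      (\<forall>v\<in>Basis. \<forall>z. differentiable_along v (iter_pd vs f) z))"
  unfolding smooth_fn_def differentiable_along_def by simp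

lemma smooth_fn_coinduct:
  assumes "P f"
    and step: "\<And>g. P g \<Longrightarrow> continuous_on UNIV g \<and> (\<forall>v\<in>Basis. \<forall>z. differentiable_along v g z) \<and>
                            (\<forall>v\<in>Basis. P (pd v g))"
  shows "smooth_fn f"
proof -
  have "set vs \<subseteq> Basis \<longrightarrow> P (iter_pd vs f)" for vs
    by (induction vs) (auto simp: assms(1) dest: step)
  then show ?thesis
    unfolding smooth_fn_iff using step by blast
qed

lemma iter_pd_pd: "iter_pd vs (pd v f) = iter_pd (vs @ [v]) f"
  by (induction vs) auto

lemma smooth_fn_pd: "smooth_fn f \<Longrightarrow> v \<in> Basis \<Longrightarrow> smooth_fn (pd v f)"
  unfolding smooth_fn_iff iter_pd_pd by auto

lemma smooth_fn_continuous: "smooth_fn f \<Longrightarrow> continuous_on UNIV f"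
  unfolding smooth_fn_iff by (metis empty_subsetI iter_pd.simps(1) list.set(1))

lemma smooth_fn_differentiable_along: "smooth_fn f \<Longrightarrow> v \<in> Basis \<Longrightarrow> differentiable_along v f z"
  unfolding smooth_fn_iff by (metis empty_subsetI iter_pd.simps(1) list.set(1))

lemma smooth_fn_const: "smooth_fn (\<lambda>z::'a::euclidean_space. c)"
proof (rule smooth_fn_coinduct[where P="\<lambda>g. \<exists>c. g = (\<lambda>z. c)"])
  fix g :: "'a \<Rightarrow> real"
  assume "\<exists>c. g = (\<lambda>z. c)"
  then obtain c where g: "g = (\<lambda>z. c)" by blast
  have "pd v g = (\<lambda>z. 0)" for v
    unfolding g by (simp add: fun_eq_iff)
  then show "continuous_on UNIV g \<and> (\<forall>v\<in>Basis. \<forall>z. differentiable_along v g z) \<and>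
      (\<forall>v\<in>Basis. \<exists>c. pd v g = (\<lambda>z. c))"
    unfolding g by auto
qed blast

lemma smooth_fn_add:
  fixes f g :: "'a::euclidean_space \<Rightarrow> real"
  shows "smooth_fn f \<Longrightarrow> smooth_fn g \<Longrightarrow> smooth_fn (\<lambda>z. f z + g z)"
proof (rule smooth_fn_coinduct[where P="\<lambda>h. \<exists>f g. smooth_fn f \<and> smooth_fn g \<and> h = (\<lambda>z. f z + g z)"])
  fix h :: "'a \<Rightarrow> real"
  assume "\<exists>f g. smooth_fn f \<and> smooth_fn g \<and> h = (\<lambda>z. f z + g z)"
  then obtain f g where fg: "smooth_fn f" "smooth_fn g" and h: "h = (\<lambda>z. f z + g z)" by blast
  have "pd v h = (\<lambda>z. pd v f z + pd v g z)" if "v \<in> Basis" for v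
    unfolding h using fg that by (simp add: fun_eq_iff smooth_fn_differentiable_along)
  then show "continuous_on UNIV h \<and> (\<forall>v\<in>Basis. \<forall>z. differentiable_along v h z) \<and>
      (\<forall>v\<in>Basis. \<exists>f g. smooth_fn f \<and> smooth_fn g \<and> pd v h = (\<lambda>z. f z + g z))"
    using fg unfolding h
    by (auto simp: smooth_fn_continuous smooth_fn_differentiable_along continuous_on_add
        intro!: smooth_fn_pd)
qed blast

lemma smooth_fn_cmult:
  fixes f :: "'a::euclidean_space \<Rightarrow> real"
  shows "smooth_fn f \<Longrightarrow> smooth_fn (\<lambda>z. c * f z)"
proof (rule smooth_fn_coinduct[where P="\<lambda>h. \<exists>f. smooth_fn f \<and> h = (\<lambda>z. c * f z)"])
  fix h :: "'a \<Rightarrow> real"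
  assume "\<exists>f. smooth_fn f \<and> h = (\<lambda>z. c * f z)"
  then obtain f where f: "smooth_fn f" and h: "h = (\<lambda>z. c * f z)" by blast
  have "pd v h = (\<lambda>z. c * pd v f z)" if "v \<in> Basis" for v
    unfolding h using f that by (simp add: fun_eq_iff smooth_fn_differentiable_along)
  then show "continuous_on UNIV h \<and> (\<forall>v\<in>Basis. \<forall>z. differentiable_along v h z) \<and>
      (\<forall>v\<in>Basis. \<exists>f. smooth_fn f \<and> pd v h = (\<lambda>z. c * f z))"
    using f unfolding h
    by (auto simp: smooth_fn_continuous smooth_fn_differentiable_along continuous_on_mult
        intro!: smooth_fn_pd)
qed blast

lemma smooth_fn_sum:
  "finite I \<Longrightarrow> (\<And>i. i \<in> I \<Longrightarrow> smooth_fn (f i)) \<Longrightarrow> smooth_fn (\<lambda>z. \<Sum>i\<in>I. f i z)"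
  by (induction I rule: finite_induct) (auto intro: smooth_fn_const smooth_fn_add)

lemma smooth_fn_linear_mult:
  fixes l :: "'a::euclidean_space \<Rightarrow> real"
  assumes l: "linear l" and f: "smooth_fn f"
  shows "smooth_fn (\<lambda>z. l z * f z)"
proof (rule smooth_fn_coinduct[where P="\<lambda>h. \<exists>f g. smooth_fn f \<and> smooth_fn g \<and> h = (\<lambda>z. l z * f z + g z)"])
  show "\<exists>f' g. smooth_fn f' \<and> smooth_fn g \<and> (\<lambda>z. l z * f z) = (\<lambda>z. l z * f' z + g z)"
    using f smooth_fn_const[of 0] by (intro exI[of _ f] exI[of _ "\<lambda>z. 0"]) simp
next
  fix h :: "'a \<Rightarrow> real"
  assume "\<exists>f g. smooth_fn f \<and> smooth_fn g \<and> h = (\<lambda>z. l z * f z + g z)"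
  then obtain f g where fg: "smooth_fn f" "smooth_fn g" and h: "h = (\<lambda>z. l z * f z + g z)"
    by blast
  have "continuous_on UNIV l"
    using l by (simp add: linear_continuous_on linear_conv_bounded_linear)
  then have "continuous_on UNIV h \<and> (\<forall>v\<in>Basis. \<forall>z. differentiable_along v h z)"
    using fg differentiable_along_linear[OF l] unfolding h
    by (auto simp: smooth_fn_continuous smooth_fn_differentiable_along continuous_on_mult
        continuous_on_add)
  moreover have "pd v h = (\<lambda>z. l z * pd v f z + (l v * f z + pd v g z))" if "v \<in> Basis" for v
    unfolding h using fg that differentiable_along_linear[OF l] pd_linear[OF l]
    by (auto simp: fun_eq_iff smooth_fn_differentiable_along algebra_simps)
  then have "smooth_fn (pd v f) \<and> smooth_fn (\<lambda>z. l v * f z + pd v g z) \<and>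
      pd v h = (\<lambda>z. l z * pd v f z + (l v * f z + pd v g z))" if "v \<in> Basis" for v
    using fg that by (auto intro!: smooth_fn_add smooth_fn_cmult smooth_fn_pd)
  ultimately show "continuous_on UNIV h \<and> (\<forall>v\<in>Basis. \<forall>z. differentiable_along v h z) \<and>
      (\<forall>v\<in>Basis. \<exists>f g. smooth_fn f \<and> smooth_fn g \<and> pd v h = (\<lambda>z. l z * f z + g z))"
    by blast
qed

inductive poly_fn :: "('a::euclidean_space \<Rightarrow> real) \<Rightarrow> bool" where
  poly_fn_const: "poly_fn (\<lambda>z. c)"
| poly_fn_linear: "linear l \<Longrightarrow> poly_fn l"
| poly_fn_add: "poly_fn f \<Longrightarrow> poly_fn g \<Longrightarrow> poly_fn (\<lambda>z. f z + g z)"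
| poly_fn_mult: "poly_fn f \<Longrightarrow> poly_fn g \<Longrightarrow> poly_fn (\<lambda>z. f z * g z)"

lemma smooth_fn_poly_mult: "poly_fn a \<Longrightarrow> smooth_fn f \<Longrightarrow> smooth_fn (\<lambda>z. a z * f z)"
proof (induction a arbitrary: f rule: poly_fn.induct)
  case (poly_fn_const c)
  then show ?case by (rule smooth_fn_cmult)
next
  case (poly_fn_linear l)
  then show ?case by (rule smooth_fn_linear_mult)
next
  case (poly_fn_add a b)
  then show ?case
    using smooth_fn_add[of "\<lambda>z. a z * f z" "\<lambda>z. b z * f z"] by (simp add: distrib_right)
next
  case (poly_fn_mult a b)
  then show ?case by (simp add: mult.assoc)
qed

lemma poly_fn_differentiable_along: "poly_fn a \<Longrightarrow> differentiable_along v a z"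
  by (induction a rule: poly_fn.induct) (auto intro: differentiable_along_linear)

lemma poly_fn_minus: "poly_fn f \<Longrightarrow> poly_fn (\<lambda>z. - f z)"
  using poly_fn_mult[OF poly_fn_const[of "-1"]] by simp

lemma poly_fn_diff: "poly_fn f \<Longrightarrow> poly_fn g \<Longrightarrow> poly_fn (\<lambda>z. f z - g z)"
  using poly_fn_add[OF _ poly_fn_minus] by simp

lemma poly_fn_divide: "poly_fn f \<Longrightarrow> poly_fn (\<lambda>z. f z / c)"
  using poly_fn_mult[OF _ poly_fn_const[of "inverse c"]] by (simp add: divide_inverse)

lemma poly_fn_sum:
  "finite I \<Longrightarrow> (\<And>i. i \<in> I \<Longrightarrow> poly_fn (f i)) \<Longrightarrow> poly_fn (\<lambda>z. \<Sum>i\<in>I. f i z)"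
  by (induction I rule: finite_induct) (auto intro: poly_fn_const poly_fn_add)

lemmas poly_fn_intros =
  poly_fn_const poly_fn_add poly_fn_mult poly_fn_minus poly_fn_diff poly_fn_divide poly_fn_sum

section \<open>Symmetry of second derivatives\<close>

lemma second_difference_mean_value:
  fixes f :: "'a::euclidean_space \<Rightarrow> real"
  assumes f: "smooth_fn f" and v: "v \<in> Basis" and w: "w \<in> Basis" and t: "t > 0"
  shows "\<exists>y. dist y z \<le> 2 * t \<and>
    f (z + t *\<^sub>R w + t *\<^sub>R v) - f (z + t *\<^sub>R w) - f (z + t *\<^sub>R v) + f z = t * t * pd v (pd w f) y"
proof -
  have dw: "\<And>y. differentiable_along w f y" and dvw: "\<And>y. differentiable_along v (pd w f) y"
    using f v w by (simp_all add: smooth_fn_differentiable_along smooth_fn_pd)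
  define \<phi> where "\<phi> s = f ((z + t *\<^sub>R v) + s *\<^sub>R w) - f (z + s *\<^sub>R w)" for s
  have "(\<phi> has_real_derivative (pd w f ((z + t *\<^sub>R v) + s *\<^sub>R w) - pd w f (z + s *\<^sub>R w))) (at s)" for s
    unfolding \<phi>_def by (intro DERIV_diff has_pd_along_line dw)
  then obtain \<sigma> where \<sigma>: "0 < \<sigma>" "\<sigma> < t"
    "\<phi> t - \<phi> 0 = t * (pd w f ((z + t *\<^sub>R v) + \<sigma> *\<^sub>R w) - pd w f (z + \<sigma> *\<^sub>R w))"
    using MVT2[OF t, of \<phi> "\<lambda>s. pd w f ((z + t *\<^sub>R v) + s *\<^sub>R w) - pd w f (z + s *\<^sub>R w)"]
    by auto
  define \<psi> where "\<psi> u = pd w f ((z + \<sigma> *\<^sub>R w) + u *\<^sub>R v)" for u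
  have "(\<psi> has_real_derivative pd v (pd w f) ((z + \<sigma> *\<^sub>R w) + u *\<^sub>R v)) (at u)" for u
    unfolding \<psi>_def by (intro has_pd_along_line dvw)
  then obtain \<tau> where \<tau>: "0 < \<tau>" "\<tau> < t"
    "\<psi> t - \<psi> 0 = t * pd v (pd w f) ((z + \<sigma> *\<^sub>R w) + \<tau> *\<^sub>R v)"
    using MVT2[OF t, of \<psi> "\<lambda>u. pd v (pd w f) ((z + \<sigma> *\<^sub>R w) + u *\<^sub>R v)"] by auto
  have "f (z + t *\<^sub>R w + t *\<^sub>R v) - f (z + t *\<^sub>R w) - f (z + t *\<^sub>R v) + f z = \<phi> t - \<phi> 0"
    unfolding \<phi>_def by (simp add: algebra_simps)
  also have "\<dots> = t * t * pd v (pd w f) (z + \<sigma> *\<^sub>R w + \<tau> *\<^sub>R v)"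
    using \<tau>(3) unfolding \<sigma>(3) \<psi>_def by (simp add: algebra_simps)
  finally have "f (z + t *\<^sub>R w + t *\<^sub>R v) - f (z + t *\<^sub>R w) - f (z + t *\<^sub>R v) + f z
      = t * t * pd v (pd w f) (z + \<sigma> *\<^sub>R w + \<tau> *\<^sub>R v)" .
  moreover have "dist (z + \<sigma> *\<^sub>R w + \<tau> *\<^sub>R v) z \<le> 2 * t"
    using norm_triangle_ineq[of "\<sigma> *\<^sub>R w" "\<tau> *\<^sub>R v"] \<sigma> \<tau> v w by (simp add: dist_norm)
  ultimately show ?thesis by blast
qed

lemma pd_commute:
  fixes f :: "'a::euclidean_space \<Rightarrow> real"
  assumes f: "smooth_fn f" and v: "v \<in> Basis" and w: "w \<in> Basis"
  shows "pd v (pd w f) z = pd w (pd v f) z"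
proof -
  have "\<exists>y y'. dist y z \<le> 2 * inverse (Suc n) \<and> dist y' z \<le> 2 * inverse (Suc n) \<and>
      pd v (pd w f) y = pd w (pd v f) y'" for n :: nat
  proof -
    define t where "t = inverse (real (Suc n))"
    have t: "t > 0"
      unfolding t_def by simp
    obtain y where y: "dist y z \<le> 2 * t"
      "f (z + t *\<^sub>R w + t *\<^sub>R v) - f (z + t *\<^sub>R w) - f (z + t *\<^sub>R v) + f z = t * t * pd v (pd w f) y"
      using second_difference_mean_value[OF f v w t] by blast
    obtain y' where y': "dist y' z \<le> 2 * t"
      "f (z + t *\<^sub>R v + t *\<^sub>R w) - f (z + t *\<^sub>R v) - f (z + t *\<^sub>R w) + f z = t * t * pd w (pd v f) y'"
      using second_difference_mean_value[OF f w v t] by blast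
    have swap: "z + t *\<^sub>R v + t *\<^sub>R w = z + t *\<^sub>R w + t *\<^sub>R v"
      by (simp add: add_ac)
    have "t * t * pd v (pd w f) y = t * t * pd w (pd v f) y'"
      using y(2) y'(2)[unfolded swap] by linarith
    then have "pd v (pd w f) y = pd w (pd v f) y'"
      using t by simp
    then show ?thesis
      using y(1) y'(1) unfolding t_def by blast
  qed
  then obtain y y' where y: "\<And>n. dist (y n) z \<le> 2 * inverse (Suc n)"
    "\<And>n. dist (y' n) z \<le> 2 * inverse (Suc n)"
    and eq: "\<And>n. pd v (pd w f) (y n) = pd w (pd v f) (y' n)"
    by (metis (no_types))
  have lim: "(\<lambda>n. 2 * inverse (real (Suc n))) \<longlonglongrightarrow> 0"
    using tendsto_mult_right_zero[OF LIMSEQ_inverse_real_of_nat] by simp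
  have "(\<lambda>n. dist (y n) z) \<longlonglongrightarrow> 0" "(\<lambda>n. dist (y' n) z) \<longlonglongrightarrow> 0"
    by (rule tendsto_sandwich[OF always_eventually always_eventually tendsto_const lim];
        blast intro: y zero_le_dist)+
  then have "y \<longlonglongrightarrow> z" "y' \<longlonglongrightarrow> z"
    by (simp_all add: tendsto_dist_iff[of y] tendsto_dist_iff[of y'])
  moreover have "continuous_on UNIV (pd v (pd w f))" "continuous_on UNIV (pd w (pd v f))"
    using f v w by (simp_all add: smooth_fn_continuous smooth_fn_pd)
  ultimately have "(\<lambda>n. pd v (pd w f) (y n)) \<longlonglongrightarrow> pd v (pd w f) z"
    "(\<lambda>n. pd w (pd v f) (y' n)) \<longlonglongrightarrow> pd w (pd v f) z"
    by (auto intro: continuous_on_tendsto_compose)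
  then show ?thesis
    unfolding eq by (rule LIMSEQ_unique)
qed

section \<open>First-order differential operators\<close>

definition lie_deriv ::
  "('j::finite \<Rightarrow> 'a \<Rightarrow> real) \<Rightarrow> ('j \<Rightarrow> 'a) \<Rightarrow> ('a::real_normed_vector \<Rightarrow> real) \<Rightarrow> 'a \<Rightarrow> real" where
  "lie_deriv a u f z = (\<Sum>j\<in>UNIV. a j z * pd (u j) f z)"

lemma lie_deriv_const [simp]: "lie_deriv a u (\<lambda>z. c) z = 0"
  by (simp add: lie_deriv_def)

lemma lie_deriv_add:
  "(\<And>j. differentiable_along (u j) f z) \<Longrightarrow> (\<And>j. differentiable_along (u j) g z) \<Longrightarrow>
   lie_deriv a u (\<lambda>z. f z + g z) z = lie_deriv a u f z + lie_deriv a u g z"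
  by (simp add: lie_deriv_def distrib_left sum.distrib)

lemma lie_deriv_diff:
  "(\<And>j. differentiable_along (u j) f z) \<Longrightarrow> (\<And>j. differentiable_along (u j) g z) \<Longrightarrow>
   lie_deriv a u (\<lambda>z. f z - g z) z = lie_deriv a u f z - lie_deriv a u g z"
  by (simp add: lie_deriv_def right_diff_distrib sum_subtractf)

lemma lie_deriv_minus:
  "(\<And>j. differentiable_along (u j) f z) \<Longrightarrow> lie_deriv a u (\<lambda>z. - f z) z = - lie_deriv a u f z"
  by (simp add: lie_deriv_def sum_negf)

lemma lie_deriv_mult:
  "(\<And>j. differentiable_along (u j) f z) \<Longrightarrow> (\<And>j. differentiable_along (u j) g z) \<Longrightarrow>
   lie_deriv a u (\<lambda>z. f z * g z) z = f z * lie_deriv a u g z + g z * lie_deriv a u f z"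
  by (simp add: lie_deriv_def sum_distrib_left sum.distrib algebra_simps)

lemma lie_deriv_divide:
  "(\<And>j. differentiable_along (u j) f z) \<Longrightarrow> lie_deriv a u (\<lambda>z. f z / c) z = lie_deriv a u f z / c"
  by (simp add: lie_deriv_def sum_divide_distrib)

lemma lie_deriv_sum:
  "finite I \<Longrightarrow> (\<And>i j. i \<in> I \<Longrightarrow> differentiable_along (u j) (f i) z) \<Longrightarrow>
   lie_deriv a u (\<lambda>z. \<Sum>i\<in>I. f i z) z = (\<Sum>i\<in>I. lie_deriv a u (f i) z)"
  by (simp add: lie_deriv_def sum_distrib_left sum.swap[of _ I])

lemmas lie_deriv_rules =
  lie_deriv_const lie_deriv_add lie_deriv_diff lie_deriv_minus lie_deriv_mult lie_deriv_divide
  lie_deriv_sum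

lemma lie_deriv_linear: "linear l \<Longrightarrow> lie_deriv a u l z = (\<Sum>j\<in>UNIV. a j z * l (u j))"
  by (simp add: lie_deriv_def pd_linear)

lemma smooth_fn_lie_deriv:
  "(\<And>j. poly_fn (a j)) \<Longrightarrow> (\<And>j. u j \<in> Basis) \<Longrightarrow> smooth_fn f \<Longrightarrow> smooth_fn (lie_deriv a u f)"
  unfolding lie_deriv_def[abs_def] by (intro smooth_fn_sum smooth_fn_poly_mult smooth_fn_pd) auto

lemma lie_deriv_lie_deriv:
  fixes f :: "'a::euclidean_space \<Rightarrow> real"
  assumes f: "smooth_fn f" and u: "\<And>j. u j \<in> Basis" and w: "\<And>k. w k \<in> Basis"
    and b: "\<And>j k. differentiable_along (u j) (b k) z"
  shows "lie_deriv a u (lie_deriv b w f) z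
    = lie_deriv (\<lambda>k. lie_deriv a u (b k)) w f z
      + (\<Sum>k\<in>UNIV. \<Sum>j\<in>UNIV. a j z * b k z * pd (u j) (pd (w k) f) z)"
proof -
  have df: "differentiable_along (u j) (pd (w k) f) z" for j k
    using f u w by (simp add: smooth_fn_differentiable_along smooth_fn_pd)
  have "lie_deriv b w f = (\<lambda>z. \<Sum>k\<in>UNIV. b k z * pd (w k) f z)"
    by (simp add: fun_eq_iff lie_deriv_def)
  then have "lie_deriv a u (lie_deriv b w f) z
      = (\<Sum>k\<in>UNIV. b k z * lie_deriv a u (pd (w k) f) z + pd (w k) f z * lie_deriv a u (b k) z)"
    using b df by (simp add: lie_deriv_sum lie_deriv_mult)
  then show ?thesis
    by (simp add: lie_deriv_def[of a u "pd _ f"] lie_deriv_def[of _ w f] sum.distrib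
        sum_distrib_left algebra_simps)
qed

lemma lie_deriv_commutator:
  fixes f :: "'a::euclidean_space \<Rightarrow> real"
  assumes f: "smooth_fn f" and u: "\<And>j. u j \<in> Basis" and w: "\<And>k. w k \<in> Basis"
    and a: "\<And>j k. differentiable_along (w k) (a j) z"
    and b: "\<And>j k. differentiable_along (u j) (b k) z"
  shows "lie_deriv a u (lie_deriv b w f) z - lie_deriv b w (lie_deriv a u f) z
    = lie_deriv (\<lambda>k. lie_deriv a u (b k)) w f z - lie_deriv (\<lambda>j. lie_deriv b w (a j)) u f z"
proof -
  have "(\<Sum>k\<in>UNIV. \<Sum>j\<in>UNIV. a j z * b k z * pd (u j) (pd (w k) f) z)
      = (\<Sum>j\<in>UNIV. \<Sum>k\<in>UNIV. b k z * a j z * pd (w k) (pd (u j) f) z)"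
    using pd_commute[OF f u w] by (subst sum.swap) (simp add: mult.commute)
  then show ?thesis
    using lie_deriv_lie_deriv[where a=a and u=u and b=b and w=w, OF f u w b]
      lie_deriv_lie_deriv[where a=b and u=w and b=a and w=u, OF f w u a] by simp
qed

section \<open>Coordinates on phase space\<close>

datatype 'n coord = CQ 'n | CP 'n | CT

lemma UNIV_coord: "UNIV = insert CT (range CQ \<union> range CP)"
proof -
  have "c \<in> insert CT (range CQ \<union> range CP)" for c :: "'n coord"
    by (cases c) auto
  then show ?thesis by blast
qed

instance coord :: (finite) finite
  by standard (simp add: UNIV_coord)

lemma sum_UNIV_coord: "(\<Sum>c\<in>UNIV. f c) = (\<Sum>i\<in>UNIV. f (CQ i)) + (\<Sum>i\<in>UNIV. f (CP i)) + f CT"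
  for f :: "'n::finite coord \<Rightarrow> 'b::comm_monoid_add"
proof -
  have "(\<Sum>c\<in>UNIV. f c) = f CT + sum f (range CQ \<union> range CP)"
    unfolding UNIV_coord by (subst sum.insert) auto
  also have "sum f (range CQ \<union> range CP) = sum f (range CQ) + sum f (range CP)"
    by (rule sum.union_disjoint) auto
  finally show ?thesis
    by (simp add: sum.reindex inj_on_def add.commute)
qed

fun component :: "'n::finite coord \<Rightarrow> 'n pt \<Rightarrow> real" where
  "component (CQ i) x = qc x i"
| "component (CP i) x = pc x i"
| "component CT x = tc x"

fun basis_vec :: "'n::finite coord \<Rightarrow> 'n pt" where
  "basis_vec (CQ i) = eq i"
| "basis_vec (CP i) = ep i"
| "basis_vec CT = et"

lemma linear_component: "linear (component c)"
  by (cases c) (auto intro!: linearI simp: qc_def pc_def tc_def)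

lemma component_basis_vec: "component c (basis_vec c') = of_bool (c' = c)"
  by (cases c; cases c') (auto simp: qc_def pc_def tc_def eq_def ep_def et_def axis_def)

lemma basis_vec_Basis: "basis_vec c \<in> Basis"
proof -
  have "axis i (1::real) \<in> Basis" for i :: "'n::finite"
    by simp
  then show ?thesis
    by (cases c) (auto simp: eq_def ep_def et_def Basis_prod_def image_iff zero_prod_def)
qed

lemma component_expansion: "(\<Sum>c\<in>UNIV. component c x *\<^sub>R basis_vec c) = x"
proof -
  obtain q p t where x: "x = (q, p, t)"
    by (cases x) auto
  have vec: "(\<Sum>i\<in>UNIV. (v $ i) *\<^sub>R axis i (1::real)) = v" for v :: "real^'n"
    by (simp add: vec_eq_iff axis_def if_distrib cong: if_cong)
  show ?thesis
    by (simp add: x vec sum_UNIV_coord qc_def pc_def tc_def eq_def ep_def et_def prod_eq_iff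
        fst_sum snd_sum sum.distrib)
qed

type_synonym 'n phase = "'n pt \<times> 'n pt"

definition x_coord :: "'n::finite coord \<Rightarrow> 'n phase \<Rightarrow> real" where
  "x_coord c z = component c (fst z)"

definition xi_coord :: "'n::finite coord \<Rightarrow> 'n phase \<Rightarrow> real" where
  "xi_coord c z = component c (snd z)"

definition x_dir :: "'n::finite coord \<Rightarrow> 'n phase" where
  "x_dir c = (basis_vec c, 0)"

definition xi_dir :: "'n::finite coord \<Rightarrow> 'n phase" where
  "xi_dir c = (0, basis_vec c)"

lemma linear_x_coord: "linear (x_coord c)"
  using linear_compose[OF linear_fst linear_component] by (simp add: x_coord_def[abs_def] o_def)

lemma linear_xi_coord: "linear (xi_coord c)"
  using linear_compose[OF linear_snd linear_component] by (simp add: xi_coord_def[abs_def] o_def)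

lemma poly_fn_coord [simp]: "poly_fn (x_coord c)" "poly_fn (xi_coord c)"
  by (simp_all add: poly_fn_linear linear_x_coord linear_xi_coord)

lemma differentiable_along_coord [simp]:
  "differentiable_along v (x_coord c) z" "differentiable_along v (xi_coord c) z"
  by (simp_all add: differentiable_along_linear linear_x_coord linear_xi_coord)

lemma Pair_zero_Basis:
  fixes u :: "'a::euclidean_space" and v :: "'b::euclidean_space"
  shows "u \<in> Basis \<Longrightarrow> (u, 0::'b) \<in> Basis" "v \<in> Basis \<Longrightarrow> (0::'a, v) \<in> Basis"
  by (auto simp: Basis_prod_def)

lemma dir_Basis [simp]: "x_dir c \<in> Basis" "xi_dir c \<in> Basis"
  unfolding x_dir_def xi_dir_def using basis_vec_Basis by (auto intro: Pair_zero_Basis)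

lemma lie_deriv_coord [simp]:
  "lie_deriv a x_dir (x_coord c) z = a c z"
  "lie_deriv a x_dir (xi_coord c) z = 0"
  "lie_deriv a xi_dir (x_coord c) z = 0"
  "lie_deriv a xi_dir (xi_coord c) z = a c z"
  by (simp_all add: lie_deriv_linear linear_x_coord linear_xi_coord x_coord_def xi_coord_def
      x_dir_def xi_dir_def component_basis_vec linear_0[OF linear_component])

section \<open>The operators as vector fields\<close>

fun D_coeff :: "'n::finite coord \<Rightarrow> 'n phase \<Rightarrow> real" where
  "D_coeff (CQ i) = (\<lambda>z. xi_coord CT z * x_coord (CQ i) z - xi_coord (CP i) z)"
| "D_coeff (CP i) = (\<lambda>z. xi_coord (CQ i) z + xi_coord CT z * x_coord (CP i) z)"
| "D_coeff CT = (\<lambda>z. - (\<Sum>i\<in>UNIV. x_coord (CP i) z * xi_coord (CP i) z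
                                    + x_coord (CQ i) z * xi_coord (CQ i) z))"

fun ialpha_coeff :: "'n::finite coord \<Rightarrow> 'n phase \<Rightarrow> real" where
  "ialpha_coeff (CQ i) = (\<lambda>z. x_coord (CP i) z / 2)"
| "ialpha_coeff (CP i) = (\<lambda>z. - (x_coord (CQ i) z / 2))"
| "ialpha_coeff CT = (\<lambda>z. - (1 / 2))"

definition euler :: "('n::finite phase \<Rightarrow> real) \<Rightarrow> 'n phase \<Rightarrow> real" where
  "euler = lie_deriv xi_coord xi_dir"

lemma poly_fn_coeff [simp]: "poly_fn (D_coeff c)" "poly_fn (ialpha_coeff c)"
  by (cases c; auto intro!: poly_fn_intros)+

lemma differentiable_along_coeff [simp]:
  "differentiable_along v (D_coeff c) z" "differentiable_along v (ialpha_coeff c) z"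
  by (simp_all add: poly_fn_differentiable_along)

lemma Dop_eq_lie_deriv: "Dop = lie_deriv D_coeff x_dir"
  by (simp add: fun_eq_iff Dop_def Es_def dx_def lie_deriv_def sum_UNIV_coord x_dir_def
      x_coord_def xi_coord_def qc_def pc_def tc_def eq_def ep_def et_def Let_def
      algebra_simps sum.distrib sum_subtractf sum_distrib_left sum_distrib_right)

lemma ialpha_eq_lie_deriv: "ialpha = lie_deriv ialpha_coeff xi_dir"
  by (simp add: fun_eq_iff ialpha_def dxi_def lie_deriv_def sum_UNIV_coord xi_dir_def
      x_coord_def qc_def pc_def eq_def ep_def et_def Let_def
      algebra_simps sum.distrib sum_subtractf sum_negf sum_distrib_left sum_distrib_right)

lemma ialpha_D_coeff: "ialpha (D_coeff k) z = 0"
  unfolding ialpha_eq_lie_deriv by (cases k) (simp_all add: lie_deriv_rules)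

lemma Dop_ialpha_coeff: "Dop (ialpha_coeff j) z = xi_coord CT z * ialpha_coeff j z + xi_coord j z / 2"
  unfolding Dop_eq_lie_deriv by (cases j) (simp_all add: lie_deriv_rules field_simps)

lemma euler_D_coeff: "euler (D_coeff k) z = D_coeff k z"
  unfolding euler_def by (cases k) (simp_all add: lie_deriv_rules algebra_simps)

lemma euler_ialpha_coeff: "euler (ialpha_coeff j) z = 0"
  unfolding euler_def by (cases j) (simp_all add: lie_deriv_rules)

lemma operators_xi_coord:
  "Dop (xi_coord c) z = 0" "ialpha (xi_coord c) z = ialpha_coeff c z" "euler (xi_coord c) z = xi_coord c z"
  by (simp_all add: Dop_eq_lie_deriv ialpha_eq_lie_deriv euler_def)

lemma smooth_fn_operators:
  "smooth_fn f \<Longrightarrow> smooth_fn (Dop f)" "smooth_fn f \<Longrightarrow> smooth_fn (ialpha f)"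
  "smooth_fn f \<Longrightarrow> smooth_fn (euler f)"
  by (simp_all add: Dop_eq_lie_deriv ialpha_eq_lie_deriv euler_def smooth_fn_lie_deriv)

lemmas Dop_rules = lie_deriv_rules[where a=D_coeff and u=x_dir, folded Dop_eq_lie_deriv]
lemmas ialpha_rules = lie_deriv_rules[where a=ialpha_coeff and u=xi_dir, folded ialpha_eq_lie_deriv]
lemmas euler_rules = lie_deriv_rules[where a=xi_coord and u=xi_dir, folded euler_def]

lemma ialpha_Dop_commutator:
  assumes "smooth_fn f"
  shows "ialpha (Dop f) z - Dop (ialpha f) z = - (xi_coord CT z * ialpha f z) - euler f z / 2"
proof -
  have "ialpha (Dop f) z - Dop (ialpha f) z
      = lie_deriv (\<lambda>k. ialpha (D_coeff k)) x_dir f z - lie_deriv (\<lambda>j. Dop (ialpha_coeff j)) xi_dir f z"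
    unfolding Dop_eq_lie_deriv ialpha_eq_lie_deriv using assms by (intro lie_deriv_commutator) auto
  also have "lie_deriv (\<lambda>k. ialpha (D_coeff k)) x_dir f z = 0"
    by (simp add: lie_deriv_def ialpha_D_coeff)
  also have "lie_deriv (\<lambda>j. Dop (ialpha_coeff j)) xi_dir f z = xi_coord CT z * ialpha f z + euler f z / 2"
    by (simp add: lie_deriv_def Dop_ialpha_coeff ialpha_eq_lie_deriv euler_def
        algebra_simps sum.distrib sum_distrib_left sum_divide_distrib)
  finally show ?thesis
    by simp
qed

lemma euler_Dop_commutator:
  assumes "smooth_fn f"
  shows "euler (Dop f) z - Dop (euler f) z = Dop f z"
proof -
  have "euler (Dop f) z - Dop (euler f) z
      = lie_deriv (\<lambda>k. euler (D_coeff k)) x_dir f z - lie_deriv (\<lambda>j. Dop (xi_coord j)) xi_dir f z"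
    unfolding Dop_eq_lie_deriv euler_def using assms by (intro lie_deriv_commutator) auto
  also have "lie_deriv (\<lambda>k. euler (D_coeff k)) x_dir f z = Dop f z"
    by (simp add: lie_deriv_def euler_D_coeff Dop_eq_lie_deriv)
  also have "lie_deriv (\<lambda>j. Dop (xi_coord j)) xi_dir f z = 0"
    by (simp add: lie_deriv_def operators_xi_coord)
  finally show ?thesis
    by simp
qed

lemma euler_ialpha_commutator:
  assumes "smooth_fn f"
  shows "euler (ialpha f) z - ialpha (euler f) z = - ialpha f z"
proof -
  have "euler (ialpha f) z - ialpha (euler f) z
      = lie_deriv (\<lambda>k. euler (ialpha_coeff k)) xi_dir f z - lie_deriv (\<lambda>j. ialpha (xi_coord j)) xi_dir f z"
    unfolding ialpha_eq_lie_deriv euler_def using assms by (intro lie_deriv_commutator) auto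
  also have "lie_deriv (\<lambda>k. euler (ialpha_coeff k)) xi_dir f z = 0"
    by (simp add: lie_deriv_def euler_ialpha_coeff)
  also have "lie_deriv (\<lambda>j. ialpha (xi_coord j)) xi_dir f z = lie_deriv ialpha_coeff xi_dir f z"
    by (simp add: lie_deriv_def operators_xi_coord)
  finally show ?thesis
    by (simp add: ialpha_eq_lie_deriv)
qed

section \<open>Euler's identity\<close>

lemma euler_homogeneous:
  fixes g :: "'a::real_normed_vector \<Rightarrow> real"
  assumes g: "(g has_derivative D) (at \<xi>)" and hom: "\<And>r. g (r *\<^sub>R \<xi>) = r ^ m * g \<xi>"
  shows "D \<xi> = real m * g \<xi>"
proof -
  have "((\<lambda>r. r *\<^sub>R \<xi>) has_derivative (\<lambda>r. r *\<^sub>R \<xi>)) (at 1)"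
    by (auto intro!: derivative_eq_intros)
  then have "((\<lambda>r. g (r *\<^sub>R \<xi>)) has_derivative (\<lambda>r. D (r *\<^sub>R \<xi>))) (at 1)"
    using has_derivative_compose[of "\<lambda>r. r *\<^sub>R \<xi>"] g by fastforce
  then have "((\<lambda>r. g (r *\<^sub>R \<xi>)) has_real_derivative D \<xi>) (at 1)"
    using has_derivative_linear[OF g]
    by (simp add: has_field_derivative_def linear_scale mult.commute[of _ "D \<xi>"])
  moreover have "((\<lambda>r. g (r *\<^sub>R \<xi>)) has_real_derivative real m * g \<xi>) (at 1)"
    unfolding hom by (auto intro!: derivative_eq_intros)
  ultimately show ?thesis
    by (rule DERIV_unique)
qed

lemma hom_poly_xi_scaleR:
  assumes "hom_poly_xi m S"
  shows "S (x, r *\<^sub>R \<xi>) = r ^ m * S (x, \<xi>)"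
proof -
  obtain c where c: "\<And>x \<xi>. S (x, \<xi>) = (\<Sum>a\<in>multi_idx m. c a x * (\<Prod>b\<in>Basis. (\<xi> \<bullet> b) ^ a b))"
    using assms unfolding hom_poly_xi_def by blast
  have "(\<Prod>b\<in>Basis. ((r *\<^sub>R \<xi>) \<bullet> b) ^ a b) = r ^ m * (\<Prod>b\<in>Basis. (\<xi> \<bullet> b) ^ a b)"
    if "a \<in> multi_idx m" for a
  proof -
    have "(\<Prod>b\<in>Basis. ((r *\<^sub>R \<xi>) \<bullet> b) ^ a b) = r ^ (\<Sum>b\<in>Basis. a b) * (\<Prod>b\<in>Basis. (\<xi> \<bullet> b) ^ a b)"
      by (simp add: power_mult_distrib prod.distrib power_sum)
    then show ?thesis
      using that by (simp add: multi_idx_def)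
  qed
  then show ?thesis
    by (simp add: c sum_distrib_left algebra_simps cong: sum.cong)
qed

lemma hom_poly_xi_differentiable:
  assumes "hom_poly_xi m S"
  shows "(\<lambda>\<xi>. S (x, \<xi>)) differentiable (at \<xi>)"
proof -
  obtain c where c: "\<And>x \<xi>. S (x, \<xi>) = (\<Sum>a\<in>multi_idx m. c a x * (\<Prod>b\<in>Basis. (\<xi> \<bullet> b) ^ a b))"
    using assms unfolding hom_poly_xi_def by blast
  have "(\<lambda>\<xi>::'a pt. \<Prod>b\<in>Basis. (\<xi> \<bullet> b) ^ a b) differentiable (at \<xi>)" for a :: "'a pt \<Rightarrow> nat"
    by (rule differentiableI, rule has_derivative_prod, rule has_derivative_power,
        rule has_derivative_inner_left, rule has_derivative_ident)
  then show ?thesis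
    unfolding c by (cases "finite (multi_idx m :: ('a pt \<Rightarrow> nat) set)") auto
qed

lemma pd_xi_dir: "pd (xi_dir c) S (x, \<xi>) = pd (basis_vec c) (\<lambda>\<xi>'. S (x, \<xi>')) \<xi>"
  by (simp add: pd_def xi_dir_def)

lemma euler_hom_poly_xi:
  assumes "hom_poly_xi m S"
  shows "euler S z = real m * S z"
proof -
  obtain x \<xi> where z: "z = (x, \<xi>)"
    by (cases z)
  obtain D where D: "((\<lambda>\<xi>'. S (x, \<xi>')) has_derivative D) (at \<xi>)"
    using hom_poly_xi_differentiable[OF assms] unfolding differentiable_def by blast
  have "euler S z = (\<Sum>c\<in>UNIV. component c \<xi> * D (basis_vec c))"
    by (simp add: euler_def lie_deriv_def z xi_coord_def pd_xi_dir pd_has_derivative[OF D])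
  also have "\<dots> = D (\<Sum>c\<in>UNIV. component c \<xi> *\<^sub>R basis_vec c)"
    using has_derivative_linear[OF D] by (simp add: linear_sum linear_scale)
  also have "\<dots> = real m * S z"
    using euler_homogeneous[OF D] hom_poly_xi_scaleR[OF assms] by (simp add: component_expansion z)
  finally show ?thesis .
qed

section \<open>The commutation relations\<close>

definition euler_degree :: "int \<Rightarrow> ('n::finite phase \<Rightarrow> real) \<Rightarrow> bool" where
  "euler_degree m f \<longleftrightarrow> smooth_fn f \<and> euler f = (\<lambda>z. of_int m * f z)"

lemma euler_degree_Rsp: "0 \<le> k \<Longrightarrow> S \<in> Rsp k \<Longrightarrow> euler_degree k S"
  by (auto simp: Rsp_def euler_degree_def fun_eq_iff euler_hom_poly_xi)

lemma Xop_eq: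
  "Xop \<delta> m f = (\<lambda>z. Dop f z + (2 * (real CARD('n) + 1) * \<delta> + of_int m) * xi_coord CT z * f z)"
  for f :: "'n::finite phase \<Rightarrow> real"
  by (simp add: fun_eq_iff Xop_def xi_coord_def)

lemma smooth_fn_Xop: "smooth_fn f \<Longrightarrow> smooth_fn (Xop \<delta> m f)"
  unfolding Xop_eq
  by (intro smooth_fn_add smooth_fn_operators smooth_fn_poly_mult) (auto intro!: poly_fn_intros)

lemma euler_degree_Xop:
  assumes "euler_degree m f"
  shows "euler_degree (m + 1) (Xop \<delta> m f)"
proof -
  have f: "smooth_fn f" and Ef: "euler f = (\<lambda>z. of_int m * f z)"
    using assms by (auto simp: euler_degree_def)
  have "euler (Xop \<delta> m f) z = of_int (m + 1) * Xop \<delta> m f z" for z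
  proof -
    have "euler (Dop f) z = Dop f z + of_int m * Dop f z"
      using euler_Dop_commutator[OF f, of z] f by (simp add: Ef Dop_rules smooth_fn_differentiable_along)
    then show ?thesis
      using f by (simp add: Xop_eq euler_rules Ef operators_xi_coord smooth_fn_differentiable_along
          smooth_fn_operators algebra_simps)
  qed
  then show ?thesis
    using f by (simp add: euler_degree_def smooth_fn_Xop fun_eq_iff)
qed

lemma euler_degree_ialpha:
  assumes "euler_degree m f"
  shows "euler_degree (m - 1) (ialpha f)"
proof -
  have f: "smooth_fn f" and Ef: "euler f = (\<lambda>z. of_int m * f z)"
    using assms by (auto simp: euler_degree_def)
  have "euler (ialpha f) z = of_int (m - 1) * ialpha f z" for z
    using euler_ialpha_commutator[OF f, of z] f
    by (simp add: Ef ialpha_rules smooth_fn_differentiable_along algebra_simps)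
  then show ?thesis
    using f by (simp add: euler_degree_def smooth_fn_operators fun_eq_iff)
qed

lemma euler_degree_Xpow: "euler_degree k f \<Longrightarrow> euler_degree (k + int l) (Xpow \<delta> l k f)"
proof (induction l)
  case (Suc l)
  then show ?case
    using euler_degree_Xop[OF Suc.IH] by (simp add: algebra_simps)
qed simp

lemma euler_degree_ialpha_pow: "euler_degree k f \<Longrightarrow> euler_degree (k - int l) ((ialpha ^^ l) f)"
proof (induction l)
  case (Suc l)
  then show ?case
    using euler_degree_ialpha[OF Suc.IH] by (simp add: algebra_simps)
qed simp

lemma Xop_linear:
  "smooth_fn f \<Longrightarrow> smooth_fn g \<Longrightarrow> Xop \<delta> m (\<lambda>z. f z + c * g z) z = Xop \<delta> m f z + c * Xop \<delta> m g z"
  by (simp add: Xop_eq Dop_rules smooth_fn_differentiable_along algebra_simps)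

lemma ialpha_linear:
  "smooth_fn f \<Longrightarrow> smooth_fn g \<Longrightarrow> ialpha (\<lambda>z. f z + c * g z) z = ialpha f z + c * ialpha g z"
  by (simp add: ialpha_rules smooth_fn_differentiable_along)

lemma ialpha_Xop_commutator:
  fixes f :: "'n::finite phase \<Rightarrow> real"
  assumes "euler_degree m f"
  shows "ialpha (Xop \<delta> m f) z - Xop \<delta> (m - 1) (ialpha f) z = rr CARD('n) \<delta> 1 m * f z"
proof -
  have f: "smooth_fn f" and Ef: "euler f = (\<lambda>z. of_int m * f z)"
    using assms by (auto simp: euler_degree_def)
  have "ialpha (Xop \<delta> m f) z = ialpha (Dop f) z
      + (2 * (real CARD('n) + 1) * \<delta> + of_int m) * (xi_coord CT z * ialpha f z - f z / 2)"
    using f by (simp add: Xop_eq ialpha_rules operators_xi_coord smooth_fn_differentiable_along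
        smooth_fn_operators algebra_simps)
  then show ?thesis
    using ialpha_Dop_commutator[OF f, of z] by (simp add: Xop_eq Ef rr_def algebra_simps)
qed

lemma rr_Suc: "rr n \<delta> (Suc l) k = rr n \<delta> 1 (k + int l) + rr n \<delta> l k"
  by (simp add: rr_def field_simps)

lemma rr_Suc_shift: "rr n \<delta> (Suc l) k = rr n \<delta> 1 k + rr n \<delta> l (k + 1)"
  by (simp add: rr_def field_simps)

lemma ialpha_Xpow_commutator:
  fixes S :: "'n::finite phase \<Rightarrow> real"
  assumes S: "euler_degree k S"
  shows "ialpha (Xpow \<delta> l k S) z - Xpow \<delta> l (k - 1) (ialpha S) z
    = rr CARD('n) \<delta> l k * Xpow \<delta> (l - 1) k S z"
proof (induction l arbitrary: z)
  case 0
  show ?case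
    by (simp add: rr_def)
next
  case (Suc l)
  let ?r = "rr CARD('n) \<delta>"
  have IH: "ialpha (Xpow \<delta> l k S) = (\<lambda>z. Xpow \<delta> l (k - 1) (ialpha S) z + ?r l k * Xpow \<delta> (l - 1) k S z)"
    using Suc.IH by (simp add: fun_eq_iff algebra_simps)
  have smooth: "smooth_fn (Xpow \<delta> l (k - 1) (ialpha S))" "smooth_fn (Xpow \<delta> (l - 1) k S)"
    using euler_degree_Xpow[OF euler_degree_ialpha[OF S]] euler_degree_Xpow[OF S]
    by (auto simp: euler_degree_def)
  have prev: "?r l k * Xop \<delta> (k + int l - 1) (Xpow \<delta> (l - 1) k S) z = ?r l k * Xpow \<delta> l k S z"
    by (cases l) (simp_all add: rr_def algebra_simps)
  have "ialpha (Xpow \<delta> (Suc l) k S) z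
      = Xop \<delta> (k + int l - 1) (ialpha (Xpow \<delta> l k S)) z + ?r 1 (k + int l) * Xpow \<delta> l k S z"
    using ialpha_Xop_commutator[OF euler_degree_Xpow[OF S, where l=l and \<delta>=\<delta>], where \<delta>=\<delta> and z=z] by simp
  also have "Xop \<delta> (k + int l - 1) (ialpha (Xpow \<delta> l k S)) z
      = Xpow \<delta> (Suc l) (k - 1) (ialpha S) z + ?r l k * Xpow \<delta> l k S z"
    unfolding IH Xop_linear[OF smooth] prev by (simp add: algebra_simps)
  finally show ?case
    by (simp only: rr_Suc[of _ _ l]) (simp add: algebra_simps)
qed

lemma Xop_ialpha_pow_commutator:
  fixes S :: "'n::finite phase \<Rightarrow> real"
  assumes S: "euler_degree k S"
  shows "Xop \<delta> (k - int l) ((ialpha ^^ l) S) z - (ialpha ^^ l) (Xop \<delta> k S) z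
    = - rr CARD('n) \<delta> l (k - int l + 1) * (ialpha ^^ (l - 1)) S z"
proof (induction l arbitrary: z)
  case 0
  show ?case
    by (simp add: rr_def)
next
  case (Suc l)
  let ?r = "rr CARD('n) \<delta>"
  have IH: "(ialpha ^^ l) (Xop \<delta> k S)
      = (\<lambda>z. Xop \<delta> (k - int l) ((ialpha ^^ l) S) z + ?r l (k - int l + 1) * (ialpha ^^ (l - 1)) S z)"
    using Suc.IH by (simp add: fun_eq_iff algebra_simps)
  have smooth: "smooth_fn (Xop \<delta> (k - int l) ((ialpha ^^ l) S))" "smooth_fn ((ialpha ^^ (l - 1)) S)"
    using euler_degree_Xop[OF euler_degree_ialpha_pow[OF S]] euler_degree_ialpha_pow[OF S]
    by (auto simp: euler_degree_def)
  have prev: "?r l (k - int l + 1) * ialpha ((ialpha ^^ (l - 1)) S) z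
      = ?r l (k - int l + 1) * (ialpha ^^ l) S z"
    by (cases l) (simp_all add: rr_def)
  have "(ialpha ^^ Suc l) (Xop \<delta> k S) z
      = ialpha (Xop \<delta> (k - int l) ((ialpha ^^ l) S)) z + ?r l (k - int l + 1) * (ialpha ^^ l) S z"
    unfolding funpow.simps o_apply IH ialpha_linear[OF smooth] prev ..
  also have "ialpha (Xop \<delta> (k - int l) ((ialpha ^^ l) S)) z
      = Xop \<delta> (k - int (Suc l)) ((ialpha ^^ Suc l) S) z + ?r 1 (k - int l) * (ialpha ^^ l) S z"
    using ialpha_Xop_commutator[OF euler_degree_ialpha_pow[OF S, where l=l], where \<delta>=\<delta> and z=z]
    by (simp add: algebra_simps)
  finally show ?case
    by (simp only: rr_Suc_shift[of _ _ l]) (simp add: algebra_simps)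
qed

theorem proposition4p3:
  fixes \<delta> :: real and k :: int and l :: nat
    and S :: "'n::finite pt \<times> 'n pt \<Rightarrow> real"
  assumes "k \<ge> 0" and "l \<ge> 1" and "S \<in> Rsp k"
  shows "(ialpha (Xpow \<delta> l k S) - Xpow \<delta> l (k - 1) (ialpha S)
           = (\<lambda>z. rr CARD('n) \<delta> l k * Xpow \<delta> (l - 1) k S z)) \<and>
         (Xop \<delta> (k - int l) ((ialpha ^^ l) S) - (ialpha ^^ l) (Xop \<delta> k S)
           = (\<lambda>z. - rr CARD('n) \<delta> l (k - int l + 1) * (ialpha ^^ (l - 1)) S z))"
proof -
  have S: "euler_degree k S"
    using assms(1,3) by (rule euler_degree_Rsp)
  show ?thesis
    using ialpha_Xpow_commutator[OF S] Xop_ialpha_pow_commutator[OF S] by (simp add: fun_eq_iff)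
qed

end
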